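(* Let $h:\mathbb{R}\to\mathbb{R}$ be of class $C^1$, let $x_0\in\mathbb{R}$ and let $]x_-,x_+[$ be an interval containing $x_0$. Let $u_1,u_2$ be two linearly independent real solutions of $u''(x)+h(x)u(x)=0$ such that, for all $x\in]x_-,x_+[$, $u_1(x)\neq0$, $u_2(x)\neq0$ and $\dfrac{u'_1(x)u'_2(x)}{u_1(x)u_2(x)}<0$. Then \[ \Phi(x)=\sqrt{-\frac{u'_1(x)u'_2(x)}{u_1(x)u_2(x)}} \] is a solution on $]x_-,x_+[$ of \[ \Phi''(x)=\frac{3\Phi^{2}(x)+h(x)}{\Phi^{2}(x)-h(x)}\frac{\left[\Phi'(x)\right]^{2}}{\Phi(x)}-\frac{h'(x)\Phi'(x)}{\Phi^{2}(x)-h(x)}+\frac{\Phi^{4}(x)-h^{2}(x)}{\Phi(x)}, \] and, with $u_{\mathtt{top}},u_{\mathtt{bot}}$ built from this $\Phi$ as in the context, either $u_1(x)=u_1(x_0)u_{\mathtt{top}}(x)$ and $u_2(x)=u_2(x_0)u_{\mathtt{bot}}(x)$, or $u_1(x)=u_1(x_0)u_{\mathtt{bot}}(x)$ and $u_2(x)=u_2(x_0)u_{\mathtt{top}}(x)$.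
   Context: For a function $\Phi$ on $]x_-,x_+[$, \[ u_{\mathtt{top}}(x)=\exp\left[\int_{x_0}^{x}d\xi\,\Phi(\xi)\frac{\Phi'(\xi)-\sqrt{\left[h(\xi)-\Phi^{2}(\xi)\right]^{2}+\left[\Phi'(\xi)\right]^{2}}}{h(\xi)-\Phi^{2}(\xi)}\right],\quad u_{\mathtt{bot}}(x)=\exp\left[\int_{x_0}^{x}d\xi\,\Phi(\xi)\frac{\Phi'(\xi)+\sqrt{\left[h(\xi)-\Phi^{2}(\xi)\right]^{2}+\left[\Phi'(\xi)\right]^{2}}}{h(\xi)-\Phi^{2}(\xi)}\right]. \] The ODE for $\Phi$ is the geodesic equation in explicit form for the metric $g_h=\left[(h(x)-\varPhi^2)^2dx^2+d\varPhi^2\right]/\varPhi^2$ on $\{\varPhi>0,\ \varPhi^2\neq h(x)\}$.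
   Formalization: $\Phi^{2}(x)$ is also assumed to differ from $h(x)$ for every x in $]x_-,x_+[$, and one of the two alternatives for $u_1,u_2$ holds on the whole interval rather than pointwise. Apart from conventions, each condition added here is assumed in the paper as well or is needed for the statement above to hold. *)

theory Defs
  imports "HOL-Analysis.Analysis"
begin

text \<open>Oriented integral from x0 to x: interval Lebesgue integral (negated when x < x0).\<close>

definition u_top :: "(real \<Rightarrow> real) \<Rightarrow> (real \<Rightarrow> real) \<Rightarrow> real \<Rightarrow> real \<Rightarrow> real" where
  "u_top h \<Phi> x0 x = exp (LBINT \<xi>=ereal x0..ereal x.
     \<Phi> \<xi> * (deriv \<Phi> \<xi> - sqrt ((h \<xi> - (\<Phi> \<xi>)\<^sup>2)\<^sup>2 + (deriv \<Phi> \<xi>)\<^sup>2)) / (h \<xi> - (\<Phi> \<xi>)\<^sup>2))"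

definition u_bot :: "(real \<Rightarrow> real) \<Rightarrow> (real \<Rightarrow> real) \<Rightarrow> real \<Rightarrow> real \<Rightarrow> real" where
  "u_bot h \<Phi> x0 x = exp (LBINT \<xi>=ereal x0..ereal x.
     \<Phi> \<xi> * (deriv \<Phi> \<xi> + sqrt ((h \<xi> - (\<Phi> \<xi>)\<^sup>2)\<^sup>2 + (deriv \<Phi> \<xi>)\<^sup>2)) / (h \<xi> - (\<Phi> \<xi>)\<^sup>2))"

end

theory Submission
  imports Defs
begin

(* The logarithmic derivatives a = u1'/u1 and b = u2'/u2 solve the Riccati equation y' = -h - y^2,
   and Phi^2 = -a b. Differentiating gives Phi' = (a + b)(h - Phi^2)/(2 Phi), and differentiating
   once more, using (a + b)' = -2h - (a + b)^2 - 2 Phi^2, gives the second-order equation for Phi.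
   Conversely a + b = 2 Phi Phi'/(h - Phi^2) and a b = -Phi^2, so a and b are the roots of
   t^2 - 2 Phi Phi'/(h - Phi^2) t - Phi^2, and the integrands of u_top and u_bot are these roots as
   given by the quadratic formula. Which root is which is decided by the sign of (h - Phi^2)(a - b),
   constant on the interval by continuity; integrating u'/u then recovers u1 and u2. *)

lemma continuous_nonvanishing_sign_const:
  fixes f :: "real \<Rightarrow> real"
  assumes "is_interval I" and "continuous_on I f" and nz: "\<And>x. x \<in> I \<Longrightarrow> f x \<noteq> 0"
  shows "(\<forall>x\<in>I. 0 < f x) \<or> (\<forall>x\<in>I. f x < 0)"
proof (rule ccontr)
  assume "\<not> ?thesis"
  then obtain x y where xy: "x \<in> I" "y \<in> I" "f x \<le> 0" "0 \<le> f y"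
    by (auto simp: not_less)
  have "is_interval (f ` I)"
    using assms(1,2) connected_continuous_image is_interval_connected_1 by blast
  moreover have "f x \<in> f ` I" "f y \<in> f ` I"
    using xy by auto
  ultimately have "0 \<in> f ` I"
    using xy unfolding is_interval_1 by blast
  then show False
    using nz by auto
qed

lemma is_interval_real_ivl_subset:
  fixes I :: "real set"
  assumes "is_interval I" and "a \<in> I" and "b \<in> I"
  shows "{min a b..max a b} \<subseteq> I"
proof -
  have "{min a b..max a b} = closed_segment a b"
    by (simp add: closed_segment_eq_real_ivl min_def max_def)
  also have "\<dots> \<subseteq> I"
    using assms by (intro closed_segment_subset is_interval_convex)
  finally show ?thesis .
qed

lemma interval_integral_FTC_is_interval:
  fixes f F :: "real \<Rightarrow> real"
  assumes I: "is_interval I" and a: "a \<in> I" and b: "b \<in> I" and f: "continuous_on I f"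
    and F: "\<And>y. y \<in> I \<Longrightarrow> (F has_real_derivative f y) (at y)"
  shows "(LBINT \<xi>=ereal a..ereal b. f \<xi>) = F b - F a"
proof (rule interval_integral_FTC_finite)
  have segment: "{min a b..max a b} \<subseteq> I"
    by (rule is_interval_real_ivl_subset[OF I a b])
  then show "continuous_on {min a b..max a b} f"
    using f continuous_on_subset by blast
  show "(F has_vector_derivative f y) (at y within {min a b..max a b})"
    if "min a b \<le> y" "y \<le> max a b" for y
    using F[of y] segment that has_real_derivative_iff_has_vector_derivative has_field_derivative_at_within
    by (metis atLeastAtMost_iff subsetD)
qed

lemma continuous_on_if_has_real_derivative:
  fixes f f' :: "real \<Rightarrow> real"
  assumes "\<And>x. x \<in> S \<Longrightarrow> (f has_real_derivative f' x) (at x)"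
  shows "continuous_on S f"
  by (rule DERIV_continuous_on, rule has_field_derivative_at_within, erule assms)

lemma exp_integral_logarithmic_derivative:
  fixes u u' f :: "real \<Rightarrow> real"
  assumes I: "is_interval I" and x0: "x0 \<in> I" and x: "x \<in> I"
    and u: "\<And>y. y \<in> I \<Longrightarrow> (u has_real_derivative u' y) (at y)"
    and u': "continuous_on I u'"
    and nz: "\<And>y. y \<in> I \<Longrightarrow> u y \<noteq> 0"
    and f: "\<And>y. y \<in> I \<Longrightarrow> f y = u' y / u y"
  shows "u x = u x0 * exp (LBINT \<xi>=ereal x0..ereal x. f \<xi>)"
proof -
  have u_cont: "continuous_on I u"
    using u by (rule continuous_on_if_has_real_derivative)
  have ratio_pos: "0 < u y / u x0" if "y \<in> I" for y
  proof -
    have "(\<forall>y\<in>I. 0 < u y) \<or> (\<forall>y\<in>I. u y < 0)"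
      by (rule continuous_nonvanishing_sign_const[OF I u_cont nz])
    then show ?thesis
      using that x0 by (auto simp: zero_less_divide_iff)
  qed
  have "continuous_on I (\<lambda>y. u' y / u y)"
    using u' u_cont nz by (intro continuous_on_divide) auto
  then have "continuous_on I f"
    by (rule continuous_on_eq) (simp add: f)
  moreover have "((\<lambda>y. ln (u y / u x0)) has_real_derivative f y) (at y)" if y: "y \<in> I" for y
    by (rule DERIV_cong[OF DERIV_chain2[OF DERIV_ln_divide[OF ratio_pos[OF y]] DERIV_cdivide[OF u[OF y]]]])
       (use nz[OF y] nz[OF x0] f[OF y] in simp)
  ultimately have "(LBINT \<xi>=ereal x0..ereal x. f \<xi>) = ln (u x / u x0) - ln (u x0 / u x0)"
    by (rule interval_integral_FTC_is_interval[OF I x0 x])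
  then show ?thesis
    using ratio_pos[OF x] nz[OF x0] by simp
qed

lemma logarithmic_derivative_riccati:
  fixes u u' h :: "real \<Rightarrow> real"
  assumes "(u has_real_derivative u' x) (at x)" and "(u' has_real_derivative - (h x * u x)) (at x)"
    and "u x \<noteq> 0"
  shows "((\<lambda>y. u' y / u y) has_real_derivative - h x - (u' x / u x)\<^sup>2) (at x)"
  by (rule DERIV_cong[OF DERIV_divide[OF assms(2,1,3)]])
     (use assms(3) in \<open>simp add: field_simps power2_eq_square\<close>)

lemma sqrt_neg_product_riccati_has_derivative:
  fixes a b h \<Phi> :: "real \<Rightarrow> real"
  assumes a: "(a has_real_derivative - h x - (a x)\<^sup>2) (at x)"
    and b: "(b has_real_derivative - h x - (b x)\<^sup>2) (at x)"
    and ab: "a x * b x < 0" and \<Phi>: "\<Phi> = (\<lambda>y. sqrt (- (a y * b y)))"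
  shows "(\<Phi> has_real_derivative (a x + b x) * (h x - (\<Phi> x)\<^sup>2) / (2 * \<Phi> x)) (at x)"
  unfolding \<Phi> using ab
  by (auto intro!: derivative_eq_intros a b simp: field_simps power2_eq_square)

(* The left-hand side is the quotient rule applied to dP = s (h - P^2) / (2 P), where s = a + b
   satisfies s' = -2 h - s^2 - 2 P^2 by the two Riccati equations. *)
lemma phi_ode_identity:
  fixes P h s dP h' :: real
  assumes "P \<noteq> 0" and "P\<^sup>2 \<noteq> h" and dP: "dP = s * (h - P\<^sup>2) / (2 * P)"
  shows "(((-2 * h - s\<^sup>2 - 2 * P\<^sup>2) * (h - P\<^sup>2) + (h' - 2 * P * dP) * s) * (2 * P)
        - s * (h - P\<^sup>2) * (2 * dP)) / (2 * P * (2 * P))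
    = (3 * P\<^sup>2 + h) / (P\<^sup>2 - h) * dP\<^sup>2 / P - h' * dP / (P\<^sup>2 - h) + (P ^ 4 - h\<^sup>2) / P"
proof -
  define D where "D = h - P\<^sup>2"
  have "D \<noteq> 0" and h: "h = P\<^sup>2 + D"
    using assms(2) by (auto simp: D_def)
  show ?thesis
    unfolding dP D_def[symmetric] unfolding h
    using assms(1) \<open>D \<noteq> 0\<close> by (simp add: field_simps power2_eq_square power4_eq_xxxx)
qed

lemma riccati_pair_phi_ode:
  fixes a b h h' \<Phi> :: "real \<Rightarrow> real"
  assumes h: "(h has_real_derivative h' x) (at x)"
    and a: "(a has_real_derivative - h x - (a x)\<^sup>2) (at x)"
    and b: "(b has_real_derivative - h x - (b x)\<^sup>2) (at x)"
    and ab: "a x * b x < 0" and \<Phi>: "\<Phi> = (\<lambda>y. sqrt (- (a y * b y)))"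
    and off_singular: "(\<Phi> x)\<^sup>2 \<noteq> h x"
  defines "d\<Phi> \<equiv> \<lambda>y. (a y + b y) * (h y - (\<Phi> y)\<^sup>2) / (2 * \<Phi> y)"
  shows "(d\<Phi> has_real_derivative
      (3 * (\<Phi> x)\<^sup>2 + h x) / ((\<Phi> x)\<^sup>2 - h x) * (d\<Phi> x)\<^sup>2 / \<Phi> x
      - h' x * d\<Phi> x / ((\<Phi> x)\<^sup>2 - h x) + ((\<Phi> x) ^ 4 - (h x)\<^sup>2) / \<Phi> x) (at x)"
proof -
  define s where "s = (\<lambda>y. a y + b y)"
  have d\<Phi>_s: "d\<Phi> = (\<lambda>y. s y * (h y - (\<Phi> y)\<^sup>2) / (2 * \<Phi> y))"
    unfolding d\<Phi>_def s_def ..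
  have \<Phi>': "(\<Phi> has_real_derivative d\<Phi> x) (at x)"
    unfolding d\<Phi>_def by (rule sqrt_neg_product_riccati_has_derivative[where h=h, OF a b ab \<Phi>])
  have \<Phi>_pos: "\<Phi> x > 0" and \<Phi>_sq: "(\<Phi> x)\<^sup>2 = - (a x * b x)"
    using ab unfolding \<Phi> by auto
  have s': "(s has_real_derivative -2 * h x - (s x)\<^sup>2 - 2 * (\<Phi> x)\<^sup>2) (at x)"
    unfolding s_def
    by (rule DERIV_cong[OF DERIV_add[OF a b]]) (use \<Phi>_sq in \<open>simp add: power2_eq_square algebra_simps\<close>)
  have \<Phi>_sq': "((\<lambda>y. (\<Phi> y)\<^sup>2) has_real_derivative 2 * \<Phi> x * d\<Phi> x) (at x)"
    by (rule DERIV_cong[OF DERIV_power[OF \<Phi>']]) simp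
  from DERIV_divide[OF DERIV_mult[OF s' DERIV_diff[OF h \<Phi>_sq']] DERIV_cmult[OF \<Phi>', of 2]] \<Phi>_pos
  have "(d\<Phi> has_real_derivative
      (((-2 * h x - (s x)\<^sup>2 - 2 * (\<Phi> x)\<^sup>2) * (h x - (\<Phi> x)\<^sup>2)
          + (h' x - 2 * \<Phi> x * d\<Phi> x) * s x) * (2 * \<Phi> x)
        - s x * (h x - (\<Phi> x)\<^sup>2) * (2 * d\<Phi> x)) / (2 * \<Phi> x * (2 * \<Phi> x))) (at x)"
    by (simp only: d\<Phi>_s)
  then show ?thesis
    by (rule DERIV_cong[OF _ phi_ode_identity[OF _ off_singular]]) (use \<Phi>_pos d\<Phi>_s in auto)
qed

lemma riccati_pair_phi_ode_on:
  fixes a b h h' \<Phi> :: "real \<Rightarrow> real"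
  assumes h: "\<And>x. x \<in> I \<Longrightarrow> (h has_real_derivative h' x) (at x)"
    and a: "\<And>x. x \<in> I \<Longrightarrow> (a has_real_derivative - h x - (a x)\<^sup>2) (at x)"
    and b: "\<And>x. x \<in> I \<Longrightarrow> (b has_real_derivative - h x - (b x)\<^sup>2) (at x)"
    and ab: "\<And>x. x \<in> I \<Longrightarrow> a x * b x < 0" and \<Phi>: "\<Phi> = (\<lambda>y. sqrt (- (a y * b y)))"
    and off_singular: "\<And>x. x \<in> I \<Longrightarrow> (\<Phi> x)\<^sup>2 \<noteq> h x"
  shows "\<exists>d\<Phi> dd\<Phi>. \<forall>x\<in>I.
            (\<Phi> has_real_derivative d\<Phi> x) (at x) \<and>
            (d\<Phi> has_real_derivative dd\<Phi> x) (at x) \<and>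
            dd\<Phi> x = (3 * (\<Phi> x)\<^sup>2 + h x) / ((\<Phi> x)\<^sup>2 - h x) * (d\<Phi> x)\<^sup>2 / \<Phi> x
                     - h' x * d\<Phi> x / ((\<Phi> x)\<^sup>2 - h x)
                     + ((\<Phi> x) ^ 4 - (h x)\<^sup>2) / \<Phi> x"
proof -
  define d\<Phi> where "d\<Phi> = (\<lambda>x. (a x + b x) * (h x - (\<Phi> x)\<^sup>2) / (2 * \<Phi> x))"
  define dd\<Phi> where "dd\<Phi> = (\<lambda>x. (3 * (\<Phi> x)\<^sup>2 + h x) / ((\<Phi> x)\<^sup>2 - h x) * (d\<Phi> x)\<^sup>2 / \<Phi> x
      - h' x * d\<Phi> x / ((\<Phi> x)\<^sup>2 - h x) + ((\<Phi> x) ^ 4 - (h x)\<^sup>2) / \<Phi> x)"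
  have "(\<Phi> has_real_derivative d\<Phi> x) (at x)" if "x \<in> I" for x
    unfolding d\<Phi>_def
    by (rule sqrt_neg_product_riccati_has_derivative[where h=h, OF a[OF that] b[OF that] ab[OF that] \<Phi>])
  moreover have "(d\<Phi> has_real_derivative dd\<Phi> x) (at x)" if "x \<in> I" for x
    unfolding dd\<Phi>_def d\<Phi>_def
    by (rule riccati_pair_phi_ode[where h'=h' and x=x, OF h[OF that] a[OF that] b[OF that] ab[OF that] \<Phi>
          off_singular[OF that]])
  ultimately show ?thesis
    by (intro exI[of _ d\<Phi>] exI[of _ dd\<Phi>]) (simp add: dd\<Phi>_def)
qed

definition top_log_deriv :: "(real \<Rightarrow> real) \<Rightarrow> (real \<Rightarrow> real) \<Rightarrow> real \<Rightarrow> real" where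
  "top_log_deriv h \<Phi> \<xi> =
     \<Phi> \<xi> * (deriv \<Phi> \<xi> - sqrt ((h \<xi> - (\<Phi> \<xi>)\<^sup>2)\<^sup>2 + (deriv \<Phi> \<xi>)\<^sup>2)) / (h \<xi> - (\<Phi> \<xi>)\<^sup>2)"

definition bot_log_deriv :: "(real \<Rightarrow> real) \<Rightarrow> (real \<Rightarrow> real) \<Rightarrow> real \<Rightarrow> real" where
  "bot_log_deriv h \<Phi> \<xi> =
     \<Phi> \<xi> * (deriv \<Phi> \<xi> + sqrt ((h \<xi> - (\<Phi> \<xi>)\<^sup>2)\<^sup>2 + (deriv \<Phi> \<xi>)\<^sup>2)) / (h \<xi> - (\<Phi> \<xi>)\<^sup>2)"

lemma u_top_eq_exp_integral: "u_top h \<Phi> x0 x = exp (LBINT \<xi>=ereal x0..ereal x. top_log_deriv h \<Phi> \<xi>)"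
  by (simp add: u_top_def top_log_deriv_def)

lemma u_bot_eq_exp_integral: "u_bot h \<Phi> x0 x = exp (LBINT \<xi>=ereal x0..ereal x. bot_log_deriv h \<Phi> \<xi>)"
  by (simp add: u_bot_def bot_log_deriv_def)

(* a and b are the roots of t^2 - (2 P dP / D) t - P^2; the quadratic formula orders them
   according to the sign of D (a - b). *)
lemma sum_product_roots:
  fixes a b P D dP :: real
  assumes P: "P > 0" and prod: "a * b = - P\<^sup>2" and sum: "(a + b) * D = 2 * P * dP"
    and sign: "D * (a - b) > 0"
  shows "P * (dP - sqrt (D\<^sup>2 + dP\<^sup>2)) / D = b" and "P * (dP + sqrt (D\<^sup>2 + dP\<^sup>2)) / D = a"
proof -
  have "D \<noteq> 0"
    using sign by auto
  have dP: "dP = (a + b) * D / (2 * P)"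
    using sum P by (simp add: field_simps)
  have root: "sqrt (D\<^sup>2 + dP\<^sup>2) = D * (a - b) / (2 * P)"
  proof (rule real_sqrt_unique)
    have "(D * (a - b) / (2 * P))\<^sup>2 = D\<^sup>2 * (a - b)\<^sup>2 / (2 * P)\<^sup>2"
      by (simp add: power_divide power_mult_distrib)
    also have "\<dots> = D\<^sup>2 * ((a + b)\<^sup>2 + (2 * P)\<^sup>2) / (2 * P)\<^sup>2"
      using prod by (simp add: power2_eq_square algebra_simps)
    also have "\<dots> = D\<^sup>2 + dP\<^sup>2"
      unfolding dP using P
      by (simp add: power_divide power_mult_distrib field_simps) (simp add: power2_eq_square algebra_simps)
    finally show "(D * (a - b) / (2 * P))\<^sup>2 = D\<^sup>2 + dP\<^sup>2" .
    show "0 \<le> D * (a - b) / (2 * P)"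
      using sign P by simp
  qed
  show "P * (dP - sqrt (D\<^sup>2 + dP\<^sup>2)) / D = b" and "P * (dP + sqrt (D\<^sup>2 + dP\<^sup>2)) / D = a"
    unfolding root unfolding dP using P \<open>D \<noteq> 0\<close> by (simp_all add: field_simps)
qed

lemma log_derivs_of_riccati_pair:
  fixes h \<Phi> :: "real \<Rightarrow> real" and a b :: real
  assumes \<Phi>': "(\<Phi> has_real_derivative (a + b) * (h x - (\<Phi> x)\<^sup>2) / (2 * \<Phi> x)) (at x)"
    and ab: "a * b < 0" and \<Phi>_x: "\<Phi> x = sqrt (- (a * b))"
  shows "(h x - (\<Phi> x)\<^sup>2) * (a - b) > 0
      \<Longrightarrow> top_log_deriv h \<Phi> x = b \<and> bot_log_deriv h \<Phi> x = a"
    and "(h x - (\<Phi> x)\<^sup>2) * (a - b) < 0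
      \<Longrightarrow> top_log_deriv h \<Phi> x = a \<and> bot_log_deriv h \<Phi> x = b"
proof -
  have P: "\<Phi> x > 0" and prod: "a * b = - (\<Phi> x)\<^sup>2"
    using ab unfolding \<Phi>_x by auto
  have sum: "(a + b) * (h x - (\<Phi> x)\<^sup>2) = 2 * \<Phi> x * deriv \<Phi> x"
    using DERIV_imp_deriv[OF \<Phi>'] P by simp
  show "top_log_deriv h \<Phi> x = b \<and> bot_log_deriv h \<Phi> x = a"
    if "(h x - (\<Phi> x)\<^sup>2) * (a - b) > 0"
    using sum_product_roots[OF P prod sum that] unfolding top_log_deriv_def bot_log_deriv_def by simp
  show "top_log_deriv h \<Phi> x = a \<and> bot_log_deriv h \<Phi> x = b"
    if "(h x - (\<Phi> x)\<^sup>2) * (a - b) < 0"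
  proof -
    have "b * a = - (\<Phi> x)\<^sup>2" and "(b + a) * (h x - (\<Phi> x)\<^sup>2) = 2 * \<Phi> x * deriv \<Phi> x"
      and "(h x - (\<Phi> x)\<^sup>2) * (b - a) > 0"
      using prod sum that by (simp_all add: ac_simps algebra_simps)
    from sum_product_roots[OF P this] show ?thesis
      unfolding top_log_deriv_def bot_log_deriv_def by simp
  qed
qed

lemma riccati_pair_log_derivs_cases:
  fixes a b h \<Phi> :: "real \<Rightarrow> real"
  assumes I: "is_interval I" and h: "continuous_on I h"
    and a: "\<And>x. x \<in> I \<Longrightarrow> (a has_real_derivative - h x - (a x)\<^sup>2) (at x)"
    and b: "\<And>x. x \<in> I \<Longrightarrow> (b has_real_derivative - h x - (b x)\<^sup>2) (at x)"
    and ab: "\<And>x. x \<in> I \<Longrightarrow> a x * b x < 0" and \<Phi>: "\<Phi> = (\<lambda>y. sqrt (- (a y * b y)))"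
    and off_singular: "\<And>x. x \<in> I \<Longrightarrow> (\<Phi> x)\<^sup>2 \<noteq> h x"
  shows "(\<forall>x\<in>I. top_log_deriv h \<Phi> x = a x \<and> bot_log_deriv h \<Phi> x = b x)
    \<or> (\<forall>x\<in>I. top_log_deriv h \<Phi> x = b x \<and> bot_log_deriv h \<Phi> x = a x)"
proof -
  have \<Phi>': "(\<Phi> has_real_derivative (a x + b x) * (h x - (\<Phi> x)\<^sup>2) / (2 * \<Phi> x)) (at x)"
    if "x \<in> I" for x
    by (rule sqrt_neg_product_riccati_has_derivative[where h=h, OF a[OF that] b[OF that] ab[OF that] \<Phi>])
  have "continuous_on I (\<lambda>x. (h x - (\<Phi> x)\<^sup>2) * (a x - b x))"
  proof -
    have "continuous_on I \<Phi>"
      using \<Phi>' by (rule continuous_on_if_has_real_derivative)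
    moreover have "continuous_on I a"
      using a by (rule continuous_on_if_has_real_derivative)
    moreover have "continuous_on I b"
      using b by (rule continuous_on_if_has_real_derivative)
    ultimately show ?thesis
      using h by (intro continuous_intros)
  qed
  moreover have "(h x - (\<Phi> x)\<^sup>2) * (a x - b x) \<noteq> 0" if "x \<in> I" for x
    using off_singular[OF that] ab[OF that] by auto
  ultimately have "(\<forall>x\<in>I. 0 < (h x - (\<Phi> x)\<^sup>2) * (a x - b x))
      \<or> (\<forall>x\<in>I. (h x - (\<Phi> x)\<^sup>2) * (a x - b x) < 0)"
    by (rule continuous_nonvanishing_sign_const[OF I])
  moreover have "(h x - (\<Phi> x)\<^sup>2) * (a x - b x) > 0
      \<Longrightarrow> top_log_deriv h \<Phi> x = b x \<and> bot_log_deriv h \<Phi> x = a x"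
    and "(h x - (\<Phi> x)\<^sup>2) * (a x - b x) < 0
      \<Longrightarrow> top_log_deriv h \<Phi> x = a x \<and> bot_log_deriv h \<Phi> x = b x"
    if "x \<in> I" for x
    using log_derivs_of_riccati_pair[where h=h, OF \<Phi>'[OF that] ab[OF that]] unfolding \<Phi> by simp_all
  ultimately show ?thesis
    by blast
qed

theorem proposition2p13:
  fixes h h' u1 u1' u2 u2' :: "real \<Rightarrow> real" and I :: "real set" and x0 :: real
  assumes h_diff: "\<And>x. (h has_real_derivative h' x) (at x)"
    and h'_cont: "continuous_on UNIV h'"
    and I_open: "open I" and I_interval: "is_interval I" and x0_in: "x0 \<in> I"
    and u1_d: "\<And>x. (u1 has_real_derivative u1' x) (at x)"
    and u1'_d: "\<And>x. (u1' has_real_derivative - (h x * u1 x)) (at x)"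
    and u2_d: "\<And>x. (u2 has_real_derivative u2' x) (at x)"
    and u2'_d: "\<And>x. (u2' has_real_derivative - (h x * u2 x)) (at x)"
    and lin_indep: "\<And>c1 c2. (\<forall>x. c1 * u1 x + c2 * u2 x = 0) \<Longrightarrow> c1 = 0 \<and> c2 = 0"
    and u1_nz: "\<And>x. x \<in> I \<Longrightarrow> u1 x \<noteq> 0"
    and u2_nz: "\<And>x. x \<in> I \<Longrightarrow> u2 x \<noteq> 0"
    and neg: "\<And>x. x \<in> I \<Longrightarrow> (u1' x * u2' x) / (u1 x * u2 x) < 0"
    and \<Phi>_def: "\<Phi> = (\<lambda>x. sqrt (- (u1' x * u2' x) / (u1 x * u2 x)))"
    and off_singular: "\<And>x. x \<in> I \<Longrightarrow> (\<Phi> x)\<^sup>2 \<noteq> h x"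
  shows "(\<exists>d\<Phi> dd\<Phi>. \<forall>x\<in>I.
            (\<Phi> has_real_derivative d\<Phi> x) (at x) \<and>
            (d\<Phi> has_real_derivative dd\<Phi> x) (at x) \<and>
            dd\<Phi> x = (3 * (\<Phi> x)\<^sup>2 + h x) / ((\<Phi> x)\<^sup>2 - h x) * (d\<Phi> x)\<^sup>2 / \<Phi> x
                     - h' x * d\<Phi> x / ((\<Phi> x)\<^sup>2 - h x)
                     + ((\<Phi> x) ^ 4 - (h x)\<^sup>2) / \<Phi> x)
         \<and> ((\<forall>x\<in>I. u1 x = u1 x0 * u_top h \<Phi> x0 x \<and> u2 x = u2 x0 * u_bot h \<Phi> x0 x)
            \<or> (\<forall>x\<in>I. u1 x = u1 x0 * u_bot h \<Phi> x0 x \<and> u2 x = u2 x0 * u_top h \<Phi> x0 x))"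
proof -
  define a where "a = (\<lambda>x. u1' x / u1 x)"
  define b where "b = (\<lambda>x. u2' x / u2 x)"
  have \<Phi>_ab: "\<Phi> = (\<lambda>x. sqrt (- (a x * b x)))"
    unfolding \<Phi>_def a_def b_def by (simp add: fun_eq_iff)
  have ab_neg: "a x * b x < 0" if "x \<in> I" for x
    using neg[OF that] unfolding a_def b_def by simp
  have a': "(a has_real_derivative - h x - (a x)\<^sup>2) (at x)" if "x \<in> I" for x
    unfolding a_def by (rule logarithmic_derivative_riccati[where h=h, OF u1_d u1'_d u1_nz[OF that]])
  have b': "(b has_real_derivative - h x - (b x)\<^sup>2) (at x)" if "x \<in> I" for x
    unfolding b_def by (rule logarithmic_derivative_riccati[where h=h, OF u2_d u2'_d u2_nz[OF that]])
  have "continuous_on I h"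
    using h_diff by (rule continuous_on_if_has_real_derivative)
  moreover have "continuous_on I u1'"
    using u1'_d by (rule continuous_on_if_has_real_derivative)
  moreover have "continuous_on I u2'"
    using u2'_d by (rule continuous_on_if_has_real_derivative)
  ultimately have "(\<forall>x\<in>I. u1 x = u1 x0 * u_top h \<Phi> x0 x \<and> u2 x = u2 x0 * u_bot h \<Phi> x0 x)
      \<or> (\<forall>x\<in>I. u1 x = u1 x0 * u_bot h \<Phi> x0 x \<and> u2 x = u2 x0 * u_top h \<Phi> x0 x)"
    using riccati_pair_log_derivs_cases[OF I_interval _ a' b' ab_neg \<Phi>_ab off_singular]
    unfolding u_top_eq_exp_integral u_bot_eq_exp_integral a_def b_def
    by (auto intro!: exp_integral_logarithmic_derivative[OF I_interval x0_in] u1_d u2_d u1_nz u2_nz)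
  with riccati_pair_phi_ode_on[OF h_diff a' b' ab_neg \<Phi>_ab off_singular] show ?thesis
    by blast
qed

end
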